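(* Let $(G,c)$ be a W-state graph, and let $X$ and $X'$ be the vertex sets of the two connected components of the spanning subgraph $G_m=(V(G),E_m(G))$ of monochromatic edges. If $|X|=1$ or $|X'|=1$, then $(G,c)$ is a W-cone.
   Context: Graphs may have parallel edges but no loops. A half-edge $2$-colouring $c$ of $G$ assigns to each pair $(e,w)$ with $w$ an endpoint of edge $e$ a colour in $\{0,1\}$ (0 = blue, 1 = red). An edge $e=uv$ is bichromatic if $c(e,u)\neq c(e,v)$ and monochromatic otherwise; $E_m(G)$, $E_b(G)$ denote the monochromatic and bichromatic edge sets; standing convention: monochromatic edges are blue at both ends. A graph is matching-covered if every edge lies in some perfect matching. A W-state graph is a half-edge $2$-coloured matching-covered graph $(G,c)$ in which every perfect matching contains exactly one bichromatic edge, and every vertex $v$ is incident with an edge $e$ with $c(e,v)=1$. For any W-state graph, $G_m$ has exactly two connected components. A W-cone is a half-edge $2$-coloured matching-covered graph $(G,c)$ containing a vertex $v$ adjacent to all other vertices (the apex) such that the set of edges incident with $v$ equals $E_b(G)$, $E(G-v)=E_m(G)$, and every vertex $u$ is incident with an edge $e$ with $c(e,u)=1$. *)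

theory Defs
  imports Main
begin

text \<open>A finite multigraph (parallel edges allowed, no loops): vertex set V, edge set E,
  and an endpoint map ends assigning to each edge a 2-element set of vertices.\<close>
definition multigraph :: "'v set \<Rightarrow> 'e set \<Rightarrow> ('e \<Rightarrow> 'v set) \<Rightarrow> bool" where
  "multigraph V E ends \<longleftrightarrow> finite V \<and> finite E \<and>
     (\<forall>e\<in>E. ends e \<subseteq> V \<and> card (ends e) = 2)"

text \<open>Half-edge 2-colouring: c e w :: bool, False = blue (0), True = red (1).
  Only the values c e w with e \<in> E and w \<in> ends e are relevant.\<close>
definition bichromatic :: "('e \<Rightarrow> 'v set) \<Rightarrow> ('e \<Rightarrow> 'v \<Rightarrow> bool) \<Rightarrow> 'e \<Rightarrow> bool" where
  "bichromatic ends c e \<longleftrightarrow> (\<exists>u\<in>ends e. \<exists>w\<in>ends e. c e u \<noteq> c e w)"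

definition Em :: "'e set \<Rightarrow> ('e \<Rightarrow> 'v set) \<Rightarrow> ('e \<Rightarrow> 'v \<Rightarrow> bool) \<Rightarrow> 'e set" where
  "Em E ends c = {e\<in>E. \<not> bichromatic ends c e}"

definition Eb :: "'e set \<Rightarrow> ('e \<Rightarrow> 'v set) \<Rightarrow> ('e \<Rightarrow> 'v \<Rightarrow> bool) \<Rightarrow> 'e set" where
  "Eb E ends c = {e\<in>E. bichromatic ends c e}"

definition mono_blue :: "'e set \<Rightarrow> ('e \<Rightarrow> 'v set) \<Rightarrow> ('e \<Rightarrow> 'v \<Rightarrow> bool) \<Rightarrow> bool" where
  "mono_blue E ends c \<longleftrightarrow> (\<forall>e\<in>Em E ends c. \<forall>w\<in>ends e. c e w = False)"

definition perfect_matching :: "'v set \<Rightarrow> 'e set \<Rightarrow> ('e \<Rightarrow> 'v set) \<Rightarrow> 'e set \<Rightarrow> bool" where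
  "perfect_matching V E ends M \<longleftrightarrow> M \<subseteq> E \<and>
     (\<forall>v\<in>V. \<exists>!e. e \<in> M \<and> v \<in> ends e)"

definition matching_covered :: "'v set \<Rightarrow> 'e set \<Rightarrow> ('e \<Rightarrow> 'v set) \<Rightarrow> bool" where
  "matching_covered V E ends \<longleftrightarrow>
     (\<forall>e\<in>E. \<exists>M. perfect_matching V E ends M \<and> e \<in> M)"

definition every_vertex_red :: "'v set \<Rightarrow> 'e set \<Rightarrow> ('e \<Rightarrow> 'v set) \<Rightarrow> ('e \<Rightarrow> 'v \<Rightarrow> bool) \<Rightarrow> bool" where
  "every_vertex_red V E ends c \<longleftrightarrow> (\<forall>v\<in>V. \<exists>e\<in>E. v \<in> ends e \<and> c e v = True)"

definition W_state_graph :: "'v set \<Rightarrow> 'e set \<Rightarrow> ('e \<Rightarrow> 'v set) \<Rightarrow> ('e \<Rightarrow> 'v \<Rightarrow> bool) \<Rightarrow> bool" where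
  "W_state_graph V E ends c \<longleftrightarrow> multigraph V E ends \<and> mono_blue E ends c \<and>
     matching_covered V E ends \<and>
     (\<forall>M. perfect_matching V E ends M \<longrightarrow> card (M \<inter> Eb E ends c) = 1) \<and>
     every_vertex_red V E ends c"

definition W_cone :: "'v set \<Rightarrow> 'e set \<Rightarrow> ('e \<Rightarrow> 'v set) \<Rightarrow> ('e \<Rightarrow> 'v \<Rightarrow> bool) \<Rightarrow> bool" where
  "W_cone V E ends c \<longleftrightarrow> multigraph V E ends \<and> mono_blue E ends c \<and>
     matching_covered V E ends \<and>
     (\<exists>v\<in>V. (\<forall>u\<in>V - {v}. \<exists>e\<in>E. ends e = {u, v}) \<and>
            {e\<in>E. v \<in> ends e} = Eb E ends c \<and>
            {e\<in>E. v \<notin> ends e} = Em E ends c) \<and>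
     every_vertex_red V E ends c"

definition mono_adj :: "'e set \<Rightarrow> ('e \<Rightarrow> 'v set) \<Rightarrow> ('e \<Rightarrow> 'v \<Rightarrow> bool) \<Rightarrow> ('v \<times> 'v) set" where
  "mono_adj E ends c = {(u, w). \<exists>e\<in>Em E ends c. ends e = {u, w}}"

definition Gm_components :: "'v set \<Rightarrow> 'e set \<Rightarrow> ('e \<Rightarrow> 'v set) \<Rightarrow> ('e \<Rightarrow> 'v \<Rightarrow> bool) \<Rightarrow> 'v set set" where
  "Gm_components V E ends c = {{w\<in>V. (u, w) \<in> (mono_adj E ends c)\<^sup>*} | u. u \<in> V}"

end

theory Submission
  imports Defs
begin

text \<open>A vertex v that is isolated in G_m carries only bichromatic edges. Every perfect
  matching covers v by one of them, so no other bichromatic edge can be completed to a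
  perfect matching: all bichromatic edges meet v. Each other vertex u has a red half-edge,
  which by the blue convention lies on a bichromatic edge, i.e. on an edge uv.\<close>

definition mono_component :: "'v set \<Rightarrow> 'e set \<Rightarrow> ('e \<Rightarrow> 'v set) \<Rightarrow> ('e \<Rightarrow> 'v \<Rightarrow> bool) \<Rightarrow> 'v \<Rightarrow> 'v set" where
  "mono_component V E ends c v = {w\<in>V. (v, w) \<in> (mono_adj E ends c)\<^sup>*}"

lemma Gm_components_eq_image: "Gm_components V E ends c = mono_component V E ends c ` V"
  unfolding Gm_components_def mono_component_def by auto

lemma mem_mono_component_self: "v \<in> V \<Longrightarrow> v \<in> mono_component V E ends c v"
  unfolding mono_component_def by simp

lemma singleton_Gm_component:
  assumes "Y \<in> Gm_components V E ends c" and "card Y = 1"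
  obtains v where "v \<in> V" and "mono_component V E ends c v = {v}"
proof -
  from assms(1) obtain v where v: "v \<in> V" and Y: "Y = mono_component V E ends c v"
    by (auto simp: Gm_components_eq_image)
  with assms(2) mem_mono_component_self have "Y = {v}"
    by (metis card_1_singletonE singletonD)
  with v Y show thesis by (intro that) auto
qed

lemma multigraph_edge_other_end:
  assumes "multigraph V E ends" and "e \<in> E" and "u \<in> ends e"
  obtains w where "w \<in> V" and "w \<noteq> u" and "ends e = {u, w}"
proof -
  have "ends e \<subseteq> V" and "card (ends e) = 2"
    using assms(1,2) unfolding multigraph_def by auto
  with assms(3) show thesis
    using that by (auto simp: card_2_iff insert_commute)
qed

lemma bichromatic_if_mono_component_singleton:
  assumes "multigraph V E ends" and "mono_component V E ends c v = {v}"
    and "e \<in> E" and "v \<in> ends e"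
  shows "bichromatic ends c e"
proof (rule ccontr)
  assume "\<not> bichromatic ends c e"
  obtain w where w: "w \<in> V" "w \<noteq> v" "ends e = {v, w}"
    using multigraph_edge_other_end[OF assms(1,3,4)] .
  with \<open>\<not> bichromatic ends c e\<close> assms(3) have "(v, w) \<in> mono_adj E ends c"
    unfolding mono_adj_def Em_def by auto
  with w(1) have "w \<in> mono_component V E ends c v"
    unfolding mono_component_def by auto
  with assms(2) w(2) show False by simp
qed

lemma bichromatic_edge_at_vertex:
  assumes "matching_covered V E ends"
    and one_bichromatic: "\<And>M. perfect_matching V E ends M \<Longrightarrow> card (M \<inter> Eb E ends c) = 1"
    and "v \<in> V" and at_v: "\<And>f. f \<in> E \<Longrightarrow> v \<in> ends f \<Longrightarrow> bichromatic ends c f"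
    and "e \<in> E" and "bichromatic ends c e"
  shows "v \<in> ends e"
proof -
  obtain M where M: "perfect_matching V E ends M" "e \<in> M"
    using assms(1,5) unfolding matching_covered_def by blast
  then have "M \<subseteq> E" and "\<exists>f. f \<in> M \<and> v \<in> ends f"
    using assms(3) unfolding perfect_matching_def by auto
  then obtain f where f: "f \<in> M" "f \<in> E" "v \<in> ends f" by auto
  have "e \<in> M \<inter> Eb E ends c" and "f \<in> M \<inter> Eb E ends c"
    using M(2) f at_v assms(5,6) unfolding Eb_def by auto
  with one_bichromatic[OF M(1)] have "e = f"
    by (metis card_1_singletonE singletonD)
  with f(3) show ?thesis by simp
qed

lemma edge_to_vertex_if_bichromatic_edges_at:
  assumes "multigraph V E ends" and "mono_blue E ends c" and "every_vertex_red V E ends c"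
    and bichromatic_at_v: "\<And>e. e \<in> E \<Longrightarrow> bichromatic ends c e \<Longrightarrow> v \<in> ends e"
    and "u \<in> V" and "u \<noteq> v"
  shows "\<exists>e\<in>E. ends e = {u, v}"
proof -
  obtain e where e: "e \<in> E" "u \<in> ends e" "c e u"
    using assms(3,5) unfolding every_vertex_red_def by auto
  with assms(2) have "bichromatic ends c e"
    unfolding mono_blue_def Em_def by auto
  with e(1) bichromatic_at_v have "v \<in> ends e" by blast
  obtain w where "w \<noteq> u" "ends e = {u, w}"
    using multigraph_edge_other_end[OF assms(1) e(1,2)] .
  with \<open>v \<in> ends e\<close> \<open>u \<noteq> v\<close> e(1) show ?thesis by auto
qed

lemma W_cone_if_mono_component_singleton:
  assumes W: "W_state_graph V E ends c"
    and "v \<in> V" and isolated: "mono_component V E ends c v = {v}"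
  shows "W_cone V E ends c"
proof -
  have mg: "multigraph V E ends" and mb: "mono_blue E ends c"
    and mc: "matching_covered V E ends" and red: "every_vertex_red V E ends c"
    and pm: "\<And>M. perfect_matching V E ends M \<Longrightarrow> card (M \<inter> Eb E ends c) = 1"
    using W unfolding W_state_graph_def by auto
  have at_v: "bichromatic ends c e \<longleftrightarrow> v \<in> ends e" if "e \<in> E" for e
    using bichromatic_if_mono_component_singleton[OF mg isolated]
      bichromatic_edge_at_vertex[OF mc pm \<open>v \<in> V\<close>] that by blast
  have "\<forall>u\<in>V - {v}. \<exists>e\<in>E. ends e = {u, v}"
    using edge_to_vertex_if_bichromatic_edges_at[OF mg mb red] at_v by blast
  moreover have "{e\<in>E. v \<in> ends e} = Eb E ends c" and "{e\<in>E. v \<notin> ends e} = Em E ends c"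
    unfolding Eb_def Em_def using at_v by auto
  ultimately show ?thesis
    unfolding W_cone_def using mg mb mc red \<open>v \<in> V\<close> by blast
qed

theorem mainTheorem10:
  fixes V :: "'v set" and E :: "'e set" and ends :: "'e \<Rightarrow> 'v set"
    and c :: "'e \<Rightarrow> 'v \<Rightarrow> bool" and X X' :: "'v set"
  assumes "W_state_graph V E ends c"
    and "Gm_components V E ends c = {X, X'}" and "X \<noteq> X'"
    and "card X = 1 \<or> card X' = 1"
  shows "W_cone V E ends c"
proof -
  obtain Y where "Y \<in> Gm_components V E ends c" and "card Y = 1"
    using assms(2,4) by auto
  then obtain v where "v \<in> V" and "mono_component V E ends c v = {v}"
    by (rule singleton_Gm_component)
  with assms(1) show ?thesis
    by (rule W_cone_if_mono_component_singleton)
qed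

end
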